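(* For $i=1,2$ let $g_i\in SU(2)$ be a lift of a rotation of $S^2\cong\mathbb{C}P^1$ by an arbitrarily small angle $\epsilon_i$ (about different axes for $i=1,2$), and let \[\Upsilon_i=\{[a,g_i(a),b]\in\mathrm{Sym}^3\mathbb{C}P^1:\ a,b\in\mathbb{C}P^1\}\subset\mathrm{Sym}^3\mathbb{C}P^1\cong\mathbb{C}P^3.\] Then $\deg\Upsilon_i=4$.
   Context: $\mathrm{Sym}^3\mathbb{C}P^1$ is identified with $\mathbb{C}P^3=\mathbb{P}(S^3\mathbb{C}^2)$ by sending an unordered triple of points of $\mathbb{C}P^1$ to the (projectivized) product of the corresponding linear forms, i.e. the homogeneous cubic in two variables with those roots. $SU(2)$ acts on $\mathbb{C}P^1\cong S^2$ by rotations. The degree of a complex surface in $\mathbb{C}P^3$ is the number of its intersection points with a generic line. *)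

theory Defs
  imports "HOL-Analysis.Analysis"
begin

definition proj_pt :: "'a::field ^ 'n \<Rightarrow> ('a ^ 'n) set" where
  "proj_pt v = {c *s v | c. c \<noteq> 0}"

text \<open>Linear form on \<open>\<complex>\<^sup>2\<close> vanishing at the point [a1:a2] of CP^1:
  (x,y) \<mapsto> a2 x - a1 y; stored as coefficient pair (coeff of x, coeff of y).\<close>

text \<open>Coefficients (of x^3, x^2 y, x y^2, y^3) of the binary cubic
  l_a l_b l_c, the product of the linear forms with roots a, b, c.\<close>
definition cubic_of :: "complex^2 \<Rightarrow> complex^2 \<Rightarrow> complex^2 \<Rightarrow> complex^4" where
  "cubic_of a b c =
    (let p1 = a$2; q1 = - a$1; p2 = b$2; q2 = - b$1; p3 = c$2; q3 = - c$1 in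
     vector [p1*p2*p3,
             p1*p2*q3 + p1*q2*p3 + q1*p2*p3,
             p1*q2*q3 + q1*p2*q3 + q1*q2*p3,
             q1*q2*q3])"

text \<open>The identification Sym^3 CP^1 = CP^3: the unordered triple [a,b,c] goes to the
  projective class of the cubic with roots a, b, c.\<close>
definition sym3_pt :: "complex^2 \<Rightarrow> complex^2 \<Rightarrow> complex^2 \<Rightarrow> (complex^4) set" where
  "sym3_pt a b c = proj_pt (cubic_of a b c)"

definition Upsilon :: "complex^2^2 \<Rightarrow> (complex^4) set set" where
  "Upsilon g = {sym3_pt a (g *v a) b | a b. a \<noteq> 0 \<and> b \<noteq> 0}"

definition proj_line :: "complex^4 \<Rightarrow> complex^4 \<Rightarrow> (complex^4) set set" where
  "proj_line u v = {proj_pt (s *s u + t *s v) | s t. (s, t) \<noteq> (0, 0)}"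

text \<open>A subset S of CP^3 has degree d if a generic line meets it in exactly d points:
  there is an open dense set of pairs (u,v) spanning lines, all of which meet S
  in exactly d points.\<close>
definition has_degree :: "(complex^4) set set \<Rightarrow> nat \<Rightarrow> bool" where
  "has_degree S d \<longleftrightarrow>
     (\<exists>U :: ((complex^4) \<times> (complex^4)) set. open U \<and> closure U = UNIV \<and>
        (\<forall>(u, v) \<in> U. (\<forall>s t. s *s u + t *s v = 0 \<longrightarrow> s = 0 \<and> t = 0) \<and>
                      card (proj_line u v \<inter> S) = d))"

definition pauli_dot :: "real^3 \<Rightarrow> complex^2^2" where
  "pauli_dot n = vector [vector [complex_of_real (n$3), complex_of_real (n$1) - \<i> * complex_of_real (n$2)],
                         vector [complex_of_real (n$1) + \<i> * complex_of_real (n$2), - complex_of_real (n$3)]]"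

definition lift_of_rotation :: "complex^2^2 \<Rightarrow> real^3 \<Rightarrow> real \<Rightarrow> bool" where
  "lift_of_rotation g n eps \<longleftrightarrow> norm n = 1 \<and>
     (\<exists>\<sigma>\<in>{1, -1::complex}.
        g = (\<chi> i j. \<sigma> * (complex_of_real (cos (eps/2)) * (mat 1 :: complex^2^2) $ i $ j
                          - \<i> * complex_of_real (sin (eps/2)) * pauli_dot n $ i $ j)))"

end

theory Submission
  imports Defs "HOL-Computational_Algebra.Fundamental_Theorem_Algebra"
begin

text \<open>For a point a of \<open>\<complex>P\<^sup>1\<close> let \<open>l\<^sub>a\<close> be the linear form vanishing at a. The cubic
  \<open>l\<^sub>a\<^sub>1 l\<^sub>a\<^sub>2 l\<^sub>a\<^sub>3\<close> lies on \<open>\<Upsilon>\<^sub>g\<close> iff \<open>g(a\<^sub>i) = a\<^sub>j\<close> for some \<open>i \<noteq> j\<close>, i.e. iff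
  \<open>\<Prod>\<^sub>i\<^sub>\<noteq>\<^sub>j det(g a\<^sub>i, a\<^sub>j) = 0\<close>. This product has degree 4 in each \<open>a\<^sub>i\<close> and is symmetric,
  so it is a quartic form \<open>F\<^sub>g\<close> in the coefficients of the cubic, and \<open>\<Upsilon>\<^sub>g = {F\<^sub>g = 0}\<close>.
  The line through [u] and [v] meets \<open>\<Upsilon>\<^sub>g\<close> in the points \<open>[z u + v]\<close> with z a root of the
  quartic polynomial \<open>z \<mapsto> F\<^sub>g(z u + v)\<close>, so it meets \<open>\<Upsilon>\<^sub>g\<close> in exactly four points as soon as
  \<open>F\<^sub>g(u)\<close>, the leading coefficient and the discriminant of that quartic are nonzero.
  Their product is a polynomial function of (u, v); its nonvanishing set is therefore open,
  and dense once it is nonempty. A point of it is found in an eigenbasis of g, where the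
  quartic becomes biquadratic with four distinct roots precisely when the eigenvalues
  \<open>\<lambda>, \<lambda>'\<close> of g satisfy \<open>\<lambda>\<^sup>2 \<noteq> \<plusminus>\<lambda>'\<^sup>2\<close>; for a rotation by a small angle \<open>\<epsilon> > 0\<close> this holds,
  since \<open>\<lambda>\<^sup>2/\<lambda>'\<^sup>2 = e\<^sup>-\<^sup>2\<^sup>i\<^sup>\<epsilon>\<close>.\<close>

section \<open>Polynomial functions\<close>

lemma polynomial_function_mult_algebra [intro]:
  fixes f g :: "'a::real_normed_vector \<Rightarrow> 'b::{euclidean_space,real_normed_algebra}"
  assumes f: "polynomial_function f" and g: "polynomial_function g"
  shows "polynomial_function (\<lambda>x. f x * g x)"
proof -
  have "f x * g x = (\<Sum>b\<in>Basis. \<Sum>c\<in>Basis. ((f x \<bullet> b) * (g x \<bullet> c)) *\<^sub>R (b * c))" for x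
    by (subst (1 2) euclidean_representation[symmetric])
       (simp add: sum_product scaleR_right.sum scaleR_left.sum algebra_simps)
  moreover have "polynomial_function (\<lambda>x. ((f x \<bullet> b) * (g x \<bullet> c)) *\<^sub>R (b * c))" for b c
  proof -
    have "real_polynomial_function (\<lambda>x. f x \<bullet> b)" "real_polynomial_function (\<lambda>x. g x \<bullet> c)"
      using f g by (simp_all add: real_polynomial_function_eq polynomial_function_inner)
    then show ?thesis
      by (simp add: polynomial_function_mult real_polynomial_function.intros(4)
          flip: real_polynomial_function_eq)
  qed
  ultimately show ?thesis by (simp add: polynomial_function_sum)
qed

lemma polynomial_function_power_algebra [intro]:
  fixes f :: "'a::real_normed_vector \<Rightarrow> 'b::{euclidean_space,real_normed_algebra_1}"
  assumes "polynomial_function f"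
  shows "polynomial_function (\<lambda>x. f x ^ n)"
  by (induction n) (use assms in auto)

lemma real_polynomial_function_nonzero_dense:
  fixes h :: "'a::real_normed_vector \<Rightarrow> real"
  assumes h: "real_polynomial_function h" and "h p \<noteq> 0"
  shows "closure {x. h x \<noteq> 0} = UNIV"
proof -
  have "x \<in> closure {x. h x \<noteq> 0}" for x
  proof -
    define line where "line = (\<lambda>w::real. x + w *\<^sub>R (p - x))"
    have "real_polynomial_function (h \<circ> line)"
      unfolding line_def using h by (intro real_polynomial_function_compose) auto
    then obtain a n where a: "\<And>w. h (line w) = (\<Sum>i\<le>n. a i * w ^ i)"
      by (metis comp_apply real_polynomial_function_iff_sum)
    have "h (line 1) \<noteq> 0" using assms(2) by (simp add: line_def)
    then have "\<exists>k\<le>n. a k \<noteq> 0" using polyfun_eq_0[of a n] a by metis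
    then have fin: "finite {w. h (line w) = 0}"
      unfolding a by (rule polyfun_rootbound_finite)
    have "\<exists>w. h (line w) \<noteq> 0 \<and> dist (line w) x < e" if "e > 0" for e
    proof -
      define r where "r = e / (norm (p - x) + 1)"
      have "r > 0" using that by (simp add: r_def add_nonneg_pos)
      then have "infinite {0<..<r}" by simp
      then obtain w where w: "w \<in> {0<..<r}" "h (line w) \<noteq> 0"
        using fin by (metis (mono_tags) finite_subset mem_Collect_eq subsetI)
      have "dist (line w) x = w * norm (p - x)" using w by (simp add: line_def dist_norm)
      also have "\<dots> \<le> r * norm (p - x)" using w by (intro mult_right_mono) auto
      also have "\<dots> < e" using that by (simp add: r_def divide_less_eq add_nonneg_pos)
      finally show ?thesis using w by blast
    qed
    then show ?thesis unfolding closure_approachable by blast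
  qed
  then show ?thesis by blast
qed

lemma polynomial_function_nonzero_dense:
  fixes f :: "'a::real_normed_vector \<Rightarrow> 'b::euclidean_space"
  assumes f: "polynomial_function f" and "f p \<noteq> 0"
  shows "closure {x. f x \<noteq> 0} = UNIV"
proof -
  obtain b where b: "b \<in> Basis" "f p \<bullet> b \<noteq> 0"
    using assms(2) euclidean_eq_iff[of "f p" 0] by auto
  have "real_polynomial_function (\<lambda>x. f x \<bullet> b)"
    using f by (simp add: real_polynomial_function_eq polynomial_function_inner)
  then have "closure {x. f x \<bullet> b \<noteq> 0} = UNIV"
    using b(2) by (rule real_polynomial_function_nonzero_dense)
  moreover have "{x. f x \<bullet> b \<noteq> 0} \<subseteq> {x. f x \<noteq> 0}" by auto
  ultimately show ?thesis using closure_mono by blast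
qed

lemma open_nonzero_polynomial_function:
  fixes f :: "'a::real_normed_vector \<Rightarrow> 'b::euclidean_space"
  assumes "polynomial_function f"
  shows "open {x. f x \<noteq> 0}"
  using assms by (intro open_Collect_neq continuous_on_polymonial_function continuous_on_const)

lemma polynomial_function_fst_nth: "polynomial_function (\<lambda>x. fst x $ i)"
  by (intro polynomial_function_bounded_linear bounded_linear_compose[OF bounded_linear_vec_nth]
      bounded_linear_fst)

lemma polynomial_function_snd_nth: "polynomial_function (\<lambda>x. snd x $ i)"
  by (intro polynomial_function_bounded_linear bounded_linear_compose[OF bounded_linear_vec_nth]
      bounded_linear_snd)

definition coeffwise_polynomial_function ::
    "('a::real_normed_vector \<Rightarrow> 'b::{euclidean_space,real_normed_field} poly) \<Rightarrow> bool" where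
  "coeffwise_polynomial_function P \<longleftrightarrow> (\<forall>k. polynomial_function (\<lambda>x. coeff (P x) k))"

lemma coeffwise_polynomial_function_const: "coeffwise_polynomial_function (\<lambda>x. P)"
  by (simp add: coeffwise_polynomial_function_def)

lemma coeffwise_polynomial_function_linear:
  assumes "polynomial_function f" "polynomial_function h"
  shows "coeffwise_polynomial_function (\<lambda>x. [:f x, h x:])"
  unfolding coeffwise_polynomial_function_def
proof
  fix k :: nat
  consider "k = 0" | "k = 1" | "k > 1" by linarith
  then show "polynomial_function (\<lambda>x. coeff [:f x, h x:] k)"
    by cases (use assms in \<open>auto simp: coeff_eq_0\<close>)
qed

lemma coeffwise_polynomial_function_add:
  "coeffwise_polynomial_function P \<Longrightarrow> coeffwise_polynomial_function Q \<Longrightarrow>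
    coeffwise_polynomial_function (\<lambda>x. P x + Q x)"
  unfolding coeffwise_polynomial_function_def by (simp add: polynomial_function_add)

lemma coeffwise_polynomial_function_diff:
  "coeffwise_polynomial_function P \<Longrightarrow> coeffwise_polynomial_function Q \<Longrightarrow>
    coeffwise_polynomial_function (\<lambda>x. P x - Q x)"
  unfolding coeffwise_polynomial_function_def by (simp add: polynomial_function_diff)

lemma coeffwise_polynomial_function_minus:
  "coeffwise_polynomial_function P \<Longrightarrow> coeffwise_polynomial_function (\<lambda>x. - P x)"
  unfolding coeffwise_polynomial_function_def by (simp add: polynomial_function_minus)

lemma coeffwise_polynomial_function_mult:
  "coeffwise_polynomial_function P \<Longrightarrow> coeffwise_polynomial_function Q \<Longrightarrow>
    coeffwise_polynomial_function (\<lambda>x. P x * Q x)"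
  unfolding coeffwise_polynomial_function_def coeff_mult
  by (intro allI polynomial_function_sum polynomial_function_mult_algebra) auto

lemma coeffwise_polynomial_function_power:
  "coeffwise_polynomial_function P \<Longrightarrow> coeffwise_polynomial_function (\<lambda>x. P x ^ n)"
  by (induction n) (simp_all add: coeffwise_polynomial_function_const coeffwise_polynomial_function_mult)

section \<open>Binary forms and projective points\<close>

lemma vector_4_nth [simp]:
  "(vector [x, y, z, w] :: 'a::zero^4) $ 1 = x"
  "(vector [x, y, z, w] :: 'a::zero^4) $ 2 = y"
  "(vector [x, y, z, w] :: 'a::zero^4) $ 3 = z"
  "(vector [x, y, z, w] :: 'a::zero^4) $ 4 = w"
  unfolding vector_def by simp_all

lemma vector_2_eq_0_iff: "(vector [x, y] :: 'a::zero^2) = 0 \<longleftrightarrow> x = 0 \<and> y = 0"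
  by (auto simp: vec_eq_iff forall_2)

lemma matrix_vector_mult_2_nth:
  fixes g :: "'a::comm_semiring_1^2^2"
  shows "(g *v a) $ 1 = g$1$1 * a$1 + g$1$2 * a$2"
    and "(g *v a) $ 2 = g$2$1 * a$1 + g$2$2 * a$2"
  by (simp_all add: matrix_vector_mult_def sum_2)

lemma proj_pt_self: "v \<in> proj_pt v"
  unfolding proj_pt_def by (rule CollectI, rule exI[of _ 1]) simp

lemma proj_pt_eqD: "proj_pt v = proj_pt w \<Longrightarrow> \<exists>k. k \<noteq> 0 \<and> v = k *s w"
  using proj_pt_self[of v] unfolding proj_pt_def by auto

lemma proj_pt_smult:
  fixes v :: "'a::field^'n"
  assumes "k \<noteq> 0"
  shows "proj_pt (k *s v) = proj_pt v"
proof (unfold proj_pt_def, intro set_eqI iffI)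
  fix x assume "x \<in> {c *s (k *s v) |c. c \<noteq> 0}"
  then obtain c where "c \<noteq> 0" "x = c *s (k *s v)" by blast
  then show "x \<in> {c *s v |c. c \<noteq> 0}"
    using assms by (auto simp: vector_smult_assoc intro!: exI[of _ "c * k"])
next
  fix x assume "x \<in> {c *s v |c. c \<noteq> 0}"
  then obtain c where "c \<noteq> 0" "x = c *s v" by blast
  then show "x \<in> {c *s (k *s v) |c. c \<noteq> 0}"
    using assms by (auto simp: vector_smult_assoc intro!: exI[of _ "c / k"])
qed

definition det2 :: "'a::comm_ring^2 \<Rightarrow> 'a^2 \<Rightarrow> 'a" where
  "det2 x y = x$1 * y$2 - x$2 * y$1"

lemma det2_self [simp]: "det2 x x = 0"
  by (simp add: det2_def mult.commute)

lemma det2_eq_0_imp_smult: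
  fixes x y :: "'a::field^2"
  assumes "x \<noteq> 0" "det2 x y = 0"
  shows "\<exists>k. y = k *s x"
proof (cases "x$1 = 0")
  case True
  then have "x$2 \<noteq> 0" using assms(1) by (auto simp: vec_eq_iff forall_2)
  then show ?thesis
    using assms(2) True by (intro exI[of _ "y$2 / x$2"]) (auto simp: vec_eq_iff forall_2 det2_def field_simps)
next
  case False
  then show ?thesis
    using assms(2) by (intro exI[of _ "y$1 / x$1"]) (auto simp: vec_eq_iff forall_2 det2_def field_simps)
qed

lemma cubic_of_nth:
  "cubic_of a b c $ 1 = a$2 * b$2 * c$2"
  "cubic_of a b c $ 2 = a$2 * b$2 * (- c$1) + a$2 * (- b$1) * c$2 + (- a$1) * b$2 * c$2"
  "cubic_of a b c $ 3 = a$2 * (- b$1) * (- c$1) + (- a$1) * b$2 * (- c$1) + (- a$1) * (- b$1) * c$2"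
  "cubic_of a b c $ 4 = (- a$1) * (- b$1) * (- c$1)"
  by (simp_all add: cubic_of_def Let_def)

lemma cubic_of_swap12: "cubic_of a b c = cubic_of b a c"
  and cubic_of_swap23: "cubic_of a b c = cubic_of a c b"
  and cubic_of_smult2: "cubic_of a (k *s b) c = k *s cubic_of a b c"
  and cubic_of_smult3: "cubic_of a b (k *s c) = k *s cubic_of a b c"
  and cubic_of_add3: "cubic_of a b (x + y) = cubic_of a b x + cubic_of a b y"
  by (simp_all add: vec_eq_iff forall_4 cubic_of_nth algebra_simps)

text \<open>Coefficients are listed as in \<^const>\<open>cubic_of\<close>: \<open>Q\<^sub>0, Q\<^sub>1, Q\<^sub>2\<close> belong to
  \<open>x\<^sup>2, x y, y\<^sup>2\<close>, and the point a of \<open>\<complex>P\<^sup>1\<close> stands for the linear form \<open>a\<^sub>2 x - a\<^sub>1 y\<close>.\<close>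

lemma binary_quadratic_splits:
  fixes Q0 Q1 Q2 :: complex
  assumes "\<not> (Q0 = 0 \<and> Q1 = 0 \<and> Q2 = 0)"
  obtains b d :: "complex^2" where "b \<noteq> 0" "d \<noteq> 0"
    "b$2 * d$2 = Q0" "b$2 * (- d$1) + (- b$1) * d$2 = Q1" "(- b$1) * (- d$1) = Q2"
proof (cases "Q0 = 0")
  case True
  with assms show ?thesis
    by (intro that[of "vector [1, 0]" "vector [Q2, - Q1]"]) (auto simp: vector_2_eq_0_iff)
next
  case False
  obtain s where "poly [:Q2, Q1, Q0:] s = 0"
    using fundamental_theorem_of_algebra_alt[of "[:Q2, Q1, Q0:]"] False by auto
  then have "Q2 = - (s * (Q1 + s * Q0))" by (simp add: add_eq_0_iff2)
  with False show ?thesis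
    by (intro that[of "vector [s, 1]" "vector [- (Q1 + s * Q0), Q0]"])
      (auto simp: vector_2_eq_0_iff algebra_simps)
qed

lemma binary_cubic_linear_factor:
  fixes c :: "complex^4"
  assumes "c \<noteq> 0"
  obtains a :: "complex^2" and Q0 Q1 Q2 where "a \<noteq> 0" "\<not> (Q0 = 0 \<and> Q1 = 0 \<and> Q2 = 0)"
    "c$1 = a$2 * Q0" "c$2 = a$2 * Q1 - a$1 * Q0" "c$3 = a$2 * Q2 - a$1 * Q1" "c$4 = - a$1 * Q2"
proof (cases "c$1 = 0")
  case True
  with assms have "\<not> (c$2 = 0 \<and> c$3 = 0 \<and> c$4 = 0)" by (auto simp: vec_eq_iff forall_4)
  with True show ?thesis
    by (intro that[of "vector [1, 0]" "- c$2" "- c$3" "- c$4"]) (auto simp: vector_2_eq_0_iff)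
next
  case False
  obtain r where "poly [:c$4, c$3, c$2, c$1:] r = 0"
    using fundamental_theorem_of_algebra_alt[of "[:c$4, c$3, c$2, c$1:]"] False by auto
  then have "c$4 = - r * (c$3 + r * (c$2 + r * c$1))" by (simp add: add_eq_0_iff2)
  with False show ?thesis
    by (intro that[of "vector [r, 1]" "c$1" "c$2 + r * c$1" "c$3 + r * (c$2 + r * c$1)"])
      (auto simp: vector_2_eq_0_iff algebra_simps)
qed

lemma cubic_of_onto:
  fixes c :: "complex^4"
  assumes "c \<noteq> 0"
  obtains a b d where "a \<noteq> 0" "b \<noteq> 0" "d \<noteq> 0" "c = cubic_of a b d"
proof -
  obtain a :: "complex^2" and Q0 Q1 Q2 where "a \<noteq> 0" and Q: "\<not> (Q0 = 0 \<and> Q1 = 0 \<and> Q2 = 0)"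
    and c: "c$1 = a$2 * Q0" "c$2 = a$2 * Q1 - a$1 * Q0" "c$3 = a$2 * Q2 - a$1 * Q1" "c$4 = - a$1 * Q2"
    using binary_cubic_linear_factor[OF assms] .
  obtain b d :: "complex^2" where "b \<noteq> 0" "d \<noteq> 0" and
    bd: "b$2 * d$2 = Q0" "b$2 * (- d$1) + (- b$1) * d$2 = Q1" "(- b$1) * (- d$1) = Q2"
    using binary_quadratic_splits[OF Q] .
  moreover have "c = cubic_of a b d"
    unfolding vec_eq_iff forall_4 cubic_of_nth c bd[symmetric] by (simp add: algebra_simps)
  ultimately show ?thesis using \<open>a \<noteq> 0\<close> that by blast
qed

section \<open>The quartic equation of \<open>\<Upsilon>\<^sub>g\<close>\<close>

text \<open>Obtained by expressing \<open>\<Prod>\<^sub>i\<^sub>\<noteq>\<^sub>j det(g a\<^sub>i, a\<^sub>j)\<close>, for \<open>g = ((A, B), (C, D))\<close>,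
  through the elementary symmetric functions of the roots \<open>a\<^sub>1, a\<^sub>2, a\<^sub>3\<close> of the cubic with
  coefficients \<open>c\<^sub>0, \<dots>, c\<^sub>3\<close>.\<close>
definition upsilon_quartic :: "'a::comm_ring_1 \<Rightarrow> 'a \<Rightarrow> 'a \<Rightarrow> 'a \<Rightarrow> 'a \<Rightarrow> 'a \<Rightarrow> 'a \<Rightarrow> 'a \<Rightarrow> 'a" where
  "upsilon_quartic A B C D c0 c1 c2 c3 = (C^6) * (c3 * (c3 * (c3 * c3))) +
    (- (2 * C^5 * D) + 2 * A * C^5) * (c2 * (c3 * (c3 * c3))) +
    (C^4 * D^2 - 4 * A * C^4 * D + A^2 * C^4) * (c2 * (c2 * (c3 * c3))) +
    (2 * A * C^3 * D^2 - 2 * A^2 * C^3 * D) * (c2 * (c2 * (c2 * c3))) +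
    (A^2 * C^2 * D^2) * (c2 * (c2 * (c2 * c2))) +
    (2 * C^4 * D^2 - 2 * B * C^5 + 2 * A * C^4 * D + 2 * A^2 * C^4) * (c1 * (c3 * (c3 * c3))) +
    (- (2 * C^3 * D^3) + 3 * B * C^4 * D + A * C^3 * D^2 - 3 * A * B * C^4 - A^2 * C^3 * D + 2 * A^3 * C^3) * (c1 * (c2 * (c3 * c3))) +
    (- (B * C^3 * D^2) - 3 * A * C^2 * D^3 + 4 * A * B * C^3 * D - A^2 * B * C^3 - 3 * A^3 * C^2 * D) * (c1 * (c2 * (c2 * c3))) +
    (- (A * B * C^2 * D^2) - A^2 * C * D^3 + A^2 * B * C^2 * D + A^3 * C * D^2) * (c1 * (c2 * (c2 * c2))) +
    (C^2 * D^4 - 2 * B * C^3 * D^2 + B^2 * C^4 + 2 * A * C^2 * D^3 + 3 * A^2 * C^2 * D^2 - 2 * A^2 * B * C^3 + 2 * A^3 * C^2 * D + A^4 * C^2) * (c1 * (c1 * (c3 * c3))) +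
    (B * C^2 * D^3 - B^2 * C^3 * D + A * C * D^4 - 3 * A * B * C^2 * D^2 + A * B^2 * C^3 + 3 * A^2 * B * C^2 * D - A^3 * B * C^2 - A^4 * C * D) * (c1 * (c1 * (c2 * c3))) +
    (A * B * C * D^3 - A * B^2 * C^2 * D - 2 * A^2 * B * C * D^2 - A^3 * D^3 + A^3 * B * C * D) * (c1 * (c1 * (c2 * c2))) +
    (B^2 * C^2 * D^2 + A^2 * D^4 - 2 * A^2 * B * C * D^2 + A^2 * B^2 * C^2 + 2 * A^3 * D^3 + A^4 * D^2) * (c1 * (c1 * (c1 * c3))) +
    (A * B^2 * C * D^2 + A^2 * B * D^3 - A^2 * B^2 * C * D - A^3 * B * D^2) * (c1 * (c1 * (c1 * c2))) +
    (A^2 * B^2 * D^2) * (c1 * (c1 * (c1 * c1))) +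
    (- (2 * C^3 * D^3) + 3 * B * C^4 * D - 3 * A * C^3 * D^2 - 3 * A * B * C^4 + 3 * A^2 * C^3 * D + 2 * A^3 * C^3) * (c0 * (c3 * (c3 * c3))) +
    (2 * C^2 * D^4 - 5 * B * C^3 * D^2 + 2 * B^2 * C^4 + A * C^2 * D^3 + 4 * A * B * C^3 * D - 6 * A^2 * C^2 * D^2 - 5 * A^2 * B * C^3 + A^3 * C^2 * D + 2 * A^4 * C^2) * (c0 * (c2 * (c3 * c3))) +
    (2 * B * C^2 * D^3 - 2 * B^2 * C^3 * D + 2 * A * C * D^4 - 3 * A * B * C^2 * D^2 + 2 * A * B^2 * C^3 + 3 * A^2 * C * D^3 + 3 * A^2 * B * C^2 * D - 3 * A^3 * C * D^2 - 2 * A^3 * B * C^2 - 2 * A^4 * C * D) * (c0 * (c2 * (c2 * c3))) +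
    (B^2 * C^2 * D^2 + A^2 * D^4 - 2 * A^2 * B * C * D^2 + A^2 * B^2 * C^2 + 2 * A^3 * D^3 + A^4 * D^2) * (c0 * (c2 * (c2 * c2))) +
    (- (2 * C * D^5) + 5 * B * C^2 * D^3 - 5 * B^2 * C^3 * D - 5 * A * C * D^4 + 3 * A * B * C^2 * D^2 + 5 * A * B^2 * C^3 - 2 * A^2 * C * D^3 - 3 * A^2 * B * C^2 * D + 2 * A^3 * C * D^2 - 5 * A^3 * B * C^2 + 5 * A^4 * C * D + 2 * A^5 * C) * (c0 * (c1 * (c3 * c3))) +
    (- (3 * B * C * D^4) + 3 * B^2 * C^2 * D^2 - 2 * B^3 * C^3 - A * D^5 + 6 * A * B * C * D^3 - 12 * A * B^2 * C^2 * D - 5 * A^2 * D^4 + 12 * A^2 * B * C * D^2 + 3 * A^2 * B^2 * C^2 - 6 * A^3 * D^3 + 6 * A^3 * B * C * D - 5 * A^4 * D^2 - 3 * A^4 * B * C - A^5 * D) * (c0 * (c1 * (c2 * c3))) +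
    (- (B^2 * C * D^3) + B^3 * C^2 * D - A * B * D^4 + 3 * A * B^2 * C * D^2 - A * B^3 * C^2 - 3 * A^2 * B^2 * C * D + A^3 * B^2 * C + A^4 * B * D) * (c0 * (c1 * (c2 * c2))) +
    (- (2 * B^2 * C * D^3) + 2 * B^3 * C^2 * D - 2 * A * B * D^4 + 3 * A * B^2 * C * D^2 - 2 * A * B^3 * C^2 - 3 * A^2 * B * D^3 - 3 * A^2 * B^2 * C * D + 3 * A^3 * B * D^2 + 2 * A^3 * B^2 * C + 2 * A^4 * B * D) * (c0 * (c1 * (c1 * c3))) +
    (- (B^3 * C * D^2) - 3 * A * B^2 * D^3 + 4 * A * B^3 * C * D - A^2 * B^3 * C - 3 * A^3 * B^2 * D) * (c0 * (c1 * (c1 * c2))) +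
    (- (2 * A * B^3 * D^2) + 2 * A^2 * B^3 * D) * (c0 * (c1 * (c1 * c1))) +
    (D^6 - 3 * B * C * D^4 + 9 * B^2 * C^2 * D^2 - 2 * B^3 * C^3 + 3 * A * D^5 - 15 * A * B * C * D^3 + 9 * A * B^2 * C^2 * D + 6 * A^2 * D^4 - 18 * A^2 * B * C * D^2 + 9 * A^2 * B^2 * C^2 + 7 * A^3 * D^3 - 15 * A^3 * B * C * D + 6 * A^4 * D^2 - 3 * A^4 * B * C + 3 * A^5 * D + A^6) * (c0 * (c0 * (c3 * c3))) +
    (2 * B * D^5 - 5 * B^2 * C * D^3 + 5 * B^3 * C^2 * D + 5 * A * B * D^4 - 3 * A * B^2 * C * D^2 - 5 * A * B^3 * C^2 + 2 * A^2 * B * D^3 + 3 * A^2 * B^2 * C * D - 2 * A^3 * B * D^2 + 5 * A^3 * B^2 * C - 5 * A^4 * B * D - 2 * A^5 * B) * (c0 * (c0 * (c2 * c3))) +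
    (B^2 * D^4 - 2 * B^3 * C * D^2 + B^4 * C^2 + 2 * A * B^2 * D^3 + 3 * A^2 * B^2 * D^2 - 2 * A^2 * B^3 * C + 2 * A^3 * B^2 * D + A^4 * B^2) * (c0 * (c0 * (c2 * c2))) +
    (2 * B^2 * D^4 - 5 * B^3 * C * D^2 + 2 * B^4 * C^2 + A * B^2 * D^3 + 4 * A * B^3 * C * D - 6 * A^2 * B^2 * D^2 - 5 * A^2 * B^3 * C + A^3 * B^2 * D + 2 * A^4 * B^2) * (c0 * (c0 * (c1 * c3))) +
    (2 * B^3 * D^3 - 3 * B^4 * C * D - A * B^3 * D^2 + 3 * A * B^4 * C + A^2 * B^3 * D - 2 * A^3 * B^3) * (c0 * (c0 * (c1 * c2))) +
    (B^4 * D^2 - 4 * A * B^4 * D + A^2 * B^4) * (c0 * (c0 * (c1 * c1))) +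
    (2 * B^3 * D^3 - 3 * B^4 * C * D + 3 * A * B^3 * D^2 + 3 * A * B^4 * C - 3 * A^2 * B^3 * D - 2 * A^3 * B^3) * (c0 * (c0 * (c0 * c3))) +
    (2 * B^4 * D^2 - 2 * B^5 * C + 2 * A * B^4 * D + 2 * A^2 * B^4) * (c0 * (c0 * (c0 * c2))) +
    (2 * B^5 * D - 2 * A * B^5) * (c0 * (c0 * (c0 * c1))) +
    (B^6) * (c0 * (c0 * (c0 * c0)))"

definition upsilon_form :: "complex^2^2 \<Rightarrow> complex^4 \<Rightarrow> complex" where
  "upsilon_form g c = upsilon_quartic (g$1$1) (g$1$2) (g$2$1) (g$2$2) (c$1) (c$2) (c$3) (c$4)"

lemma upsilon_form_cubic_of:
  "upsilon_form g (cubic_of a b c) =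
     det2 (g *v a) b * det2 (g *v b) a * det2 (g *v a) c * det2 (g *v c) a *
     det2 (g *v b) c * det2 (g *v c) b"
  unfolding upsilon_form_def upsilon_quartic_def cubic_of_nth det2_def matrix_vector_mult_2_nth
  by algebra

lemma upsilon_form_smult: "upsilon_form g (k *s c) = k ^ 4 * upsilon_form g c"
  unfolding upsilon_form_def upsilon_quartic_def by simp algebra

lemma invertible_matrix_vector_mult_nonzero:
  fixes g :: "'a::field^'n^'n"
  assumes "invertible g" "a \<noteq> 0"
  shows "g *v a \<noteq> 0"
  using inj_matrix_vector_mult[OF assms(1)] assms(2) by (metis injD matrix_vector_mult_0_right)

lemma cubic_of_in_Upsilon:
  assumes "invertible g" "a \<noteq> 0" "b \<noteq> 0" "c \<noteq> 0" "det2 (g *v a) b = 0"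
  shows "proj_pt (cubic_of a b c) \<in> Upsilon g"
proof -
  obtain k where k: "b = k *s (g *v a)"
    using det2_eq_0_imp_smult invertible_matrix_vector_mult_nonzero assms by metis
  with assms(3) have "k \<noteq> 0" by auto
  have "proj_pt (cubic_of a b c) = proj_pt (cubic_of a (g *v a) c)"
    unfolding k cubic_of_smult2 using \<open>k \<noteq> 0\<close> by (rule proj_pt_smult)
  also have "\<dots> \<in> Upsilon g" unfolding Upsilon_def sym3_pt_def using assms(2,4) by blast
  finally show ?thesis .
qed

lemma Upsilon_iff_upsilon_form:
  assumes g: "invertible g" and "c \<noteq> 0"
  shows "proj_pt c \<in> Upsilon g \<longleftrightarrow> upsilon_form g c = 0"
proof
  assume "proj_pt c \<in> Upsilon g"
  then obtain a b where "proj_pt c = proj_pt (cubic_of a (g *v a) b)"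
    unfolding Upsilon_def sym3_pt_def by auto
  then obtain k where "c = k *s cubic_of a (g *v a) b" using proj_pt_eqD by blast
  then show "upsilon_form g c = 0" by (simp add: upsilon_form_smult upsilon_form_cubic_of)
next
  assume "upsilon_form g c = 0"
  obtain a1 a2 a3 where a: "a1 \<noteq> 0" "a2 \<noteq> 0" "a3 \<noteq> 0" and c: "c = cubic_of a1 a2 a3"
    using cubic_of_onto[OF \<open>c \<noteq> 0\<close>] .
  note in_Upsilon = cubic_of_in_Upsilon[OF g]
  from \<open>upsilon_form g c = 0\<close> consider
      "det2 (g *v a1) a2 = 0" | "det2 (g *v a2) a1 = 0" | "det2 (g *v a1) a3 = 0"
    | "det2 (g *v a3) a1 = 0" | "det2 (g *v a2) a3 = 0" | "det2 (g *v a3) a2 = 0"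
    unfolding c upsilon_form_cubic_of by auto
  then show "proj_pt c \<in> Upsilon g"
    unfolding c using a in_Upsilon[of a1 a2 a3] in_Upsilon[of a2 a1 a3] in_Upsilon[of a1 a3 a2]
      in_Upsilon[of a3 a1 a2] in_Upsilon[of a2 a3 a1] in_Upsilon[of a3 a2 a1]
    by cases (metis cubic_of_swap12 cubic_of_swap23)+
qed

section \<open>Quartic polynomials with four distinct roots\<close>

definition quartic_disc :: "'a::comm_ring_1 poly \<Rightarrow> 'a" where
  "quartic_disc p =
    (let e = coeff p 0; d = coeff p 1; c = coeff p 2; b = coeff p 3; a = coeff p 4 in
     256*a^3*e^3 - 192*a^2*b*d*e^2 - 128*a^2*c^2*e^2 + 144*a^2*c*d^2*e - 27*a^2*d^4
      + 144*a*b^2*c*e^2 - 6*a*b^2*d^2*e - 80*a*b*c^2*d*e + 18*a*b*c*d^3 + 16*a*c^4*e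
      - 4*a*c^3*d^2 - 27*b^4*e^2 + 18*b^3*c*d*e - 4*b^3*d^3 - 4*b^2*c^3*e + b^2*c^2*d^2)"

lemma quartic_disc_double_root:
  fixes p :: "'a::idom poly"
  assumes "degree p \<le> 4" "poly p r = 0" "poly (pderiv p) r = 0"
  shows "quartic_disc p = 0"
proof -
  define e where "e = coeff p 0"
  define d where "d = coeff p 1"
  define c where "c = coeff p 2"
  define b where "b = coeff p 3"
  define a where "a = coeff p 4"
  have p: "p = [:e, d, c, b, a:]"
  proof (rule poly_eqI)
    fix n
    show "coeff p n = coeff [:e, d, c, b, a:] n"
      using assms(1) by (auto simp: e_def d_def c_def b_def a_def coeff_pCons coeff_eq_0 numeral_eq_Suc
          split: nat.split)
  qed
  have e: "e = - (d*r + c*r^2 + b*r^3 + a*r^4)"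
    using assms(2) by (subst (asm) p) (simp add: algebra_simps power2_eq_square power3_eq_cube
        power4_eq_xxxx eq_neg_iff_add_eq_0)
  have d: "d = - (2*c*r + 3*b*r^2 + 4*a*r^3)"
    using assms(3) by (subst (asm) p) (simp add: pderiv_pCons algebra_simps power2_eq_square
        power3_eq_cube eq_neg_iff_add_eq_0)
  show ?thesis
    unfolding quartic_disc_def Let_def e_def[symmetric] d_def[symmetric] c_def[symmetric]
      b_def[symmetric] a_def[symmetric] e unfolding d by algebra
qed

lemma rsquarefree_if_quartic_disc_nonzero:
  fixes p :: "'a::field_char_0 poly"
  assumes "degree p \<le> 4" "quartic_disc p \<noteq> 0"
  shows "rsquarefree p"
  using quartic_disc_double_root[OF assms(1)] assms(2) unfolding rsquarefree_roots by blast

lemma card_roots_rsquarefree: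
  fixes p :: "complex poly"
  assumes "rsquarefree p"
  shows "card {z. poly p z = 0} = degree p"
proof -
  have "p \<noteq> 0" using assms by (simp add: rsquarefree_def)
  have "degree p = degree (smult (lead_coeff p) (\<Prod>z | poly p z = 0. [:-z, 1:]))"
    using complex_poly_decompose_rsquarefree[OF assms] by simp
  also have "\<dots> = degree (\<Prod>z | poly p z = 0. [:-z, 1:])" using \<open>p \<noteq> 0\<close> by simp
  also have "\<dots> = (\<Sum>z | poly p z = 0. degree [:-z, 1:])"
    by (rule degree_prod_eq_sum_degree) auto
  also have "\<dots> = card {z. poly p z = 0}" by simp
  finally show ?thesis by simp
qed

lemma quartic_disc_biquadratic:
  fixes K m t :: "'a::idom"
  shows "quartic_disc [:K*m, 0, - (K*t), 0, K*m:] = 16 * K^6 * m^2 * (4*m^2 - t^2)^2"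
  unfolding quartic_disc_def Let_def by (simp add: eval_nat_numeral) algebra

section \<open>Lines meeting \<open>\<Upsilon>\<^sub>g\<close>\<close>

lemma degree_upsilon_quartic_le:
  fixes A B C D c0 c1 c2 c3 :: "'a::idom poly"
  assumes "degree A = 0" "degree B = 0" "degree C = 0" "degree D = 0"
    and "degree c0 \<le> 1" "degree c1 \<le> 1" "degree c2 \<le> 1" "degree c3 \<le> 1"
  shows "degree (upsilon_quartic A B C D c0 c1 c2 c3) \<le> 4"
proof -
  have const_add: "degree (p + q) = 0" and const_diff: "degree (p - q) = 0"
    and const_mult: "degree (p * q) = 0"
    if "degree p = 0" "degree q = 0" for p q :: "'a poly"
    using that degree_add_le[of p 0 q] degree_diff_le[of p 0 q] degree_mult_le[of p q] by simp_all
  have const_minus: "degree (- p) = 0" and const_power: "degree (p ^ n) = 0"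
    if "degree p = 0" for p :: "'a poly" and n
    using that degree_power_le[of p n] by simp_all
  have monomial: "degree (K * (X1 * (X2 * (X3 * X4)))) \<le> 4"
    if "degree K = 0" "degree X1 \<le> 1" "degree X2 \<le> 1" "degree X3 \<le> 1" "degree X4 \<le> 1"
    for K X1 X2 X3 X4 :: "'a poly"
    using that degree_mult_le[of X3 X4] degree_mult_le[of X2 "X3 * X4"]
      degree_mult_le[of X1 "X2 * (X3 * X4)"] degree_mult_le[of K "X1 * (X2 * (X3 * X4))"]
    by linarith
  show ?thesis
    unfolding upsilon_quartic_def
    by (intro degree_add_le degree_diff_le monomial const_add const_diff const_minus const_mult
        const_power assms) simp_all
qed

definition line_poly :: "complex^2^2 \<Rightarrow> complex^4 \<Rightarrow> complex^4 \<Rightarrow> complex poly" where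
  "line_poly g u v = upsilon_quartic [:g$1$1:] [:g$1$2:] [:g$2$1:] [:g$2$2:]
     [:v$1, u$1:] [:v$2, u$2:] [:v$3, u$3:] [:v$4, u$4:]"

lemma poly_upsilon_quartic:
  "poly (upsilon_quartic A B C D c0 c1 c2 c3) z =
     upsilon_quartic (poly A z) (poly B z) (poly C z) (poly D z)
       (poly c0 z) (poly c1 z) (poly c2 z) (poly c3 z)"
  by (simp add: upsilon_quartic_def)

lemma poly_line_poly: "poly (line_poly g u v) z = upsilon_form g (z *s u + v)"
  by (simp add: line_poly_def poly_upsilon_quartic upsilon_form_def add.commute)

lemma degree_line_poly: "degree (line_poly g u v) \<le> 4"
  unfolding line_poly_def by (rule degree_upsilon_quartic_le) simp_all

lemma upsilon_form_0 [simp]: "upsilon_form g 0 = 0"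
  using upsilon_form_smult[of g 0 0] by simp

lemma independent_if_line_poly_roots:
  assumes "upsilon_form g u \<noteq> 0" "card {z. poly (line_poly g u v) z = 0} \<noteq> 1"
    and "s *s u + t *s v = 0"
  shows "s = 0 \<and> t = 0"
proof (cases "t = 0")
  case True
  then show ?thesis using assms(1,3) by auto
next
  case False
  with assms(3) have v: "v = (- s / t) *s u"
    by (simp add: vec_eq_iff field_simps add_eq_0_iff2)
  have on_line: "z *s u + v = (z - s / t) *s u" for z by (simp add: v vec_eq_iff algebra_simps)
  have "poly (line_poly g u v) z = (z - s / t) ^ 4 * upsilon_form g u" for z
    by (simp only: poly_line_poly on_line upsilon_form_smult)
  then have "{z. poly (line_poly g u v) z = 0} = {s / t}" using assms(1) by auto
  with assms(2) show ?thesis by simp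
qed

lemma inj_line_param:
  assumes "\<forall>s t. s *s u + t *s v = 0 \<longrightarrow> s = 0 \<and> t = 0"
  shows "inj (\<lambda>z. proj_pt (z *s u + v))"
proof (rule injI)
  fix z w assume "proj_pt (z *s u + v) = proj_pt (w *s u + v)"
  then obtain k where k: "k \<noteq> 0" "z *s u + v = k *s (w *s u + v)" using proj_pt_eqD by blast
  then have "(z - k * w) *s u + (1 - k) *s v = 0" by (simp add: vec_eq_iff algebra_simps)
  with assms have "z - k * w = 0" "1 - k = 0" by blast+
  then show "z = w" by simp
qed

lemma proj_line_Int_Upsilon:
  assumes g: "invertible g" and u: "upsilon_form g u \<noteq> 0"
    and indep: "\<forall>s t. s *s u + t *s v = 0 \<longrightarrow> s = 0 \<and> t = 0"
  shows "proj_line u v \<inter> Upsilon g = (\<lambda>z. proj_pt (z *s u + v)) ` {z. poly (line_poly g u v) z = 0}"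
proof (intro set_eqI iffI)
  fix x assume x: "x \<in> proj_line u v \<inter> Upsilon g"
  then obtain s t where "(s, t) \<noteq> (0, 0)" and x_eq: "x = proj_pt (s *s u + t *s v)"
    unfolding proj_line_def by auto
  with indep have "s *s u + t *s v \<noteq> 0" by auto
  with x x_eq have on_Upsilon: "upsilon_form g (s *s u + t *s v) = 0"
    by (simp add: Upsilon_iff_upsilon_form[OF g])
  have "t \<noteq> 0"
  proof
    assume "t = 0"
    with \<open>(s, t) \<noteq> (0, 0)\<close> on_Upsilon u show False by (simp add: upsilon_form_smult)
  qed
  then have st: "s *s u + t *s v = t *s ((s / t) *s u + v)" by (simp add: vec_eq_iff field_simps)
  have "t ^ 4 * upsilon_form g ((s / t) *s u + v) = 0"
    using on_Upsilon by (simp only: st upsilon_form_smult)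
  then have "upsilon_form g ((s / t) *s u + v) = 0" using \<open>t \<noteq> 0\<close> by simp
  moreover have "x = proj_pt ((s / t) *s u + v)"
    unfolding x_eq st using \<open>t \<noteq> 0\<close> by (rule proj_pt_smult)
  ultimately show "x \<in> (\<lambda>z. proj_pt (z *s u + v)) ` {z. poly (line_poly g u v) z = 0}"
    by (intro image_eqI[of _ _ "s / t"]) (simp_all add: poly_line_poly)
next
  fix x assume "x \<in> (\<lambda>z. proj_pt (z *s u + v)) ` {z. poly (line_poly g u v) z = 0}"
  then obtain z where z: "upsilon_form g (z *s u + v) = 0" and x: "x = proj_pt (z *s u + v)"
    by (auto simp: poly_line_poly)
  have "z *s u + v \<noteq> 0" using indep[rule_format, of z 1] by auto
  with z x have "x \<in> Upsilon g" by (simp add: Upsilon_iff_upsilon_form[OF g])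
  moreover have "x \<in> proj_line u v"
    unfolding proj_line_def x by (rule CollectI, rule exI[of _ z], rule exI[of _ 1]) simp
  ultimately show "x \<in> proj_line u v \<inter> Upsilon g" by blast
qed

text \<open>The first two factors are in fact equal; only their nonvanishing is used: the second
  makes \<open>z \<mapsto> F\<^sub>g(z u + v)\<close> a quartic, the first keeps [u], the one point of the line
  missed by \<open>z \<mapsto> [z u + v]\<close>, off \<open>\<Upsilon>\<^sub>g\<close>.\<close>
definition line_test :: "complex^2^2 \<Rightarrow> (complex^4) \<times> (complex^4) \<Rightarrow> complex" where
  "line_test g uv = (let Q = line_poly g (fst uv) (snd uv) in
     upsilon_form g (fst uv) * coeff Q 4 * quartic_disc Q)"

lemma card_proj_line_Int_Upsilon:
  assumes g: "invertible g" and "line_test g (u, v) \<noteq> 0"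
  shows "(\<forall>s t. s *s u + t *s v = 0 \<longrightarrow> s = 0 \<and> t = 0) \<and> card (proj_line u v \<inter> Upsilon g) = 4"
proof -
  define Q where "Q = line_poly g u v"
  have u: "upsilon_form g u \<noteq> 0" and "coeff Q 4 \<noteq> 0" "quartic_disc Q \<noteq> 0"
    using assms(2) by (simp_all add: line_test_def Q_def Let_def)
  have "degree Q = 4" using degree_line_poly[of g u v] le_degree[of Q 4] \<open>coeff Q 4 \<noteq> 0\<close>
    unfolding Q_def by linarith
  moreover have "rsquarefree Q"
    using \<open>quartic_disc Q \<noteq> 0\<close> \<open>degree Q = 4\<close> by (intro rsquarefree_if_quartic_disc_nonzero) simp_all
  ultimately have roots: "card {z. poly Q z = 0} = 4" by (simp add: card_roots_rsquarefree)
  then have "card {z. poly (line_poly g u v) z = 0} \<noteq> 1" by (simp add: Q_def)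
  then have indep: "\<forall>s t. s *s u + t *s v = 0 \<longrightarrow> s = 0 \<and> t = 0"
    using independent_if_line_poly_roots[OF u] by blast
  have "card (proj_line u v \<inter> Upsilon g) = card {z. poly Q z = 0}"
    unfolding proj_line_Int_Upsilon[OF g u indep] Q_def
    by (rule card_image) (rule inj_on_subset[OF inj_line_param[OF indep] subset_UNIV])
  with indep roots show ?thesis by simp
qed

section \<open>Generic lines\<close>

lemma polynomial_function_upsilon_form:
  "polynomial_function (\<lambda>x :: (complex^4) \<times> (complex^4). upsilon_form g (fst x))"
  unfolding upsilon_form_def upsilon_quartic_def
  by (intro polynomial_function_add polynomial_function_diff polynomial_function_minus
      polynomial_function_mult_algebra polynomial_function_power_algebra
      polynomial_function_fst_nth polynomial_function_const)

lemma coeffwise_polynomial_function_line_poly: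
  "coeffwise_polynomial_function (\<lambda>x :: (complex^4) \<times> (complex^4). line_poly g (fst x) (snd x))"
  unfolding line_poly_def upsilon_quartic_def
  by (intro coeffwise_polynomial_function_add coeffwise_polynomial_function_diff
      coeffwise_polynomial_function_minus coeffwise_polynomial_function_mult
      coeffwise_polynomial_function_power coeffwise_polynomial_function_linear
      coeffwise_polynomial_function_const polynomial_function_fst_nth polynomial_function_snd_nth)

lemma polynomial_function_line_test: "polynomial_function (line_test g)"
proof -
  have "polynomial_function (\<lambda>x. coeff (line_poly g (fst x) (snd x)) k)" for k
    using coeffwise_polynomial_function_line_poly unfolding coeffwise_polynomial_function_def by blast
  then show ?thesis
    unfolding line_test_def quartic_disc_def Let_def
    by (intro polynomial_function_add polynomial_function_diff polynomial_function_mult_algebra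
        polynomial_function_power_algebra polynomial_function_upsilon_form polynomial_function_const)
qed

lemma has_degree_Upsilon_if_line_test:
  assumes g: "invertible g" and "line_test g p \<noteq> 0"
  shows "has_degree (Upsilon g) 4"
  unfolding has_degree_def
proof (intro exI[of _ "{x. line_test g x \<noteq> 0}"] conjI)
  show "open {x. line_test g x \<noteq> 0}"
    by (rule open_nonzero_polynomial_function[OF polynomial_function_line_test])
  show "closure {x. line_test g x \<noteq> 0} = UNIV"
    by (rule polynomial_function_nonzero_dense[OF polynomial_function_line_test assms(2)])
  show "\<forall>(u, v)\<in>{x. line_test g x \<noteq> 0}.
      (\<forall>s t. s *s u + t *s v = 0 \<longrightarrow> s = 0 \<and> t = 0) \<and> card (proj_line u v \<inter> Upsilon g) = 4"
    unfolding Ball_def split_paired_All mem_Collect_eq prod.case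
    using card_proj_line_Int_Upsilon[OF g] by blast
qed

text \<open>In an eigenbasis e, f of g, with eigenvalues \<open>\<lambda>, \<lambda>'\<close>, the line through the cubics with roots
  \<open>{e + f, e - f, e}\<close> and \<open>{e + f, e - f, f}\<close> meets \<open>\<Upsilon>\<^sub>g\<close> in the roots of the biquadratic
  \<open>K (m z\<^sup>4 - t z\<^sup>2 + m)\<close> with \<open>m = \<lambda>\<^sup>2\<lambda>'\<^sup>2\<close>, \<open>t = \<lambda>\<^sup>4 + \<lambda>'\<^sup>4\<close>, whose discriminant is a
  nonzero multiple of \<open>(\<lambda>\<^sup>2 - \<lambda>'\<^sup>2)\<^sup>4 (\<lambda>\<^sup>2 + \<lambda>'\<^sup>2)\<^sup>4\<close>.\<close>
lemma line_test_nonzero_in_eigenbasis: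
  fixes g :: "complex^2^2"
  assumes ge: "g *v e = l *s e" and gf: "g *v f = l' *s f" and ef: "det2 e f \<noteq> 0"
    and l: "l \<noteq> 0" "l' \<noteq> 0" "l^2 \<noteq> l'^2" "l^2 \<noteq> - (l'^2)"
  shows "\<exists>p. line_test g p \<noteq> 0"
proof -
  define E where "E a b = a *s e + b *s f" for a b
  have det2_E: "det2 (g *v E a b) (E c d) = (a * l * d - b * l' * c) * det2 e f" for a b c d
    by (simp add: E_def matrix_vector_right_distrib vector_scalar_commute ge gf det2_def algebra_simps)
  define u where "u = cubic_of (E 1 1) (E 1 (-1)) (E 1 0)"
  define v where "v = cubic_of (E 1 1) (E 1 (-1)) (E 0 1)"
  define K where "K = - ((l + l')^2 * (det2 e f)^6)"
  define m where "m = l^2 * l'^2"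
  define t where "t = l^4 + l'^4"
  have "l + l' \<noteq> 0" using l(3) by (auto simp: add_eq_0_iff2)
  have line: "z *s u + v = cubic_of (E 1 1) (E 1 (-1)) (E z 1)" for z
  proof -
    have "E z 1 = z *s E 1 0 + E 0 1" by (simp add: E_def vec_eq_iff)
    then show ?thesis unfolding u_def v_def by (simp add: cubic_of_add3 cubic_of_smult3)
  qed
  have "poly (line_poly g u v) z = poly [:K*m, 0, - (K*t), 0, K*m:] z" for z
    unfolding poly_line_poly line upsilon_form_cubic_of det2_E K_def m_def t_def by simp algebra
  then have Q: "line_poly g u v = [:K*m, 0, - (K*t), 0, K*m:]"
    using poly_eq_poly_eq_iff by blast
  have "K \<noteq> 0" "m \<noteq> 0" using ef \<open>l + l' \<noteq> 0\<close> l(1,2) by (simp_all add: K_def m_def)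
  have "4*m^2 - t^2 = - ((l^2 - l'^2)^2 * (l^2 + l'^2)^2)" unfolding m_def t_def by algebra
  moreover have "l^2 - l'^2 \<noteq> 0" "l^2 + l'^2 \<noteq> 0" using l(3,4) by (auto simp: add_eq_0_iff2)
  ultimately have "4*m^2 - t^2 \<noteq> 0" by simp
  moreover have "upsilon_form g u \<noteq> 0"
  proof -
    have "- l \<noteq> l'" using \<open>l + l' \<noteq> 0\<close> by (simp add: neg_eq_iff_add_eq_0)
    then show ?thesis
      using ef \<open>l + l' \<noteq> 0\<close> l(1,2) unfolding u_def upsilon_form_cubic_of det2_E by simp
  qed
  moreover have "coeff (line_poly g u v) 4 = K * m" unfolding Q by (simp add: eval_nat_numeral)
  ultimately have "line_test g (u, v) \<noteq> 0"
    using \<open>K \<noteq> 0\<close> \<open>m \<noteq> 0\<close> by (simp add: line_test_def Q quartic_disc_biquadratic)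
  then show ?thesis by blast
qed

section \<open>Rotations\<close>

lemma eigenvector_2x2_exists:
  fixes g :: "complex^2^2"
  assumes tr: "g$1$1 + g$2$2 = l + l'" and det: "det g = l * l'" and "l \<noteq> l'"
  obtains e where "e \<noteq> 0" "g *v e = l *s e"
proof (cases "g$1$1 - l' = 0 \<and> g$2$1 = 0")
  case False
  have "g$1$1 * (g$1$1 - l') + g$1$2 * g$2$1 = l * (g$1$1 - l')"
    "g$2$1 * (g$1$1 - l') + g$2$2 * g$2$1 = l * g$2$1"
    using tr det unfolding det_2 by algebra+
  with False show ?thesis
    by (intro that[of "vector [g$1$1 - l', g$2$1]"])
      (simp_all add: vector_2_eq_0_iff vec_eq_iff forall_2 matrix_vector_mult_2_nth)
next
  case True
  have "\<not> (g$1$2 = 0 \<and> g$2$2 - l' = 0)"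
    using True tr \<open>l \<noteq> l'\<close> by auto
  moreover have "g$1$1 * g$1$2 + g$1$2 * (g$2$2 - l') = l * g$1$2"
    "g$2$1 * g$1$2 + g$2$2 * (g$2$2 - l') = l * (g$2$2 - l')"
    using tr det unfolding det_2 by algebra+
  ultimately show ?thesis
    by (intro that[of "vector [g$1$2, g$2$2 - l']"])
      (simp_all add: vector_2_eq_0_iff vec_eq_iff forall_2 matrix_vector_mult_2_nth)
qed

lemma det2_eigenvectors_nonzero:
  fixes g :: "complex^2^2"
  assumes "e \<noteq> 0" "f \<noteq> 0" "g *v e = l *s e" "g *v f = l' *s f" "l \<noteq> l'"
  shows "det2 e f \<noteq> 0"
proof
  assume "det2 e f = 0"
  then obtain k where k: "f = k *s e" using det2_eq_0_imp_smult assms(1) by blast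
  have "l' *s f = l *s f"
    using assms(3,4) unfolding k by (simp add: vector_scalar_commute vector_smult_assoc mult.commute) blast
  with assms(2,5) show False by auto
qed

lemma has_degree_Upsilon_if_eigenvalues:
  fixes g :: "complex^2^2"
  assumes tr: "g$1$1 + g$2$2 = l + l'" and det: "det g = l * l'"
    and l: "l * l' \<noteq> 0" "l^2 \<noteq> l'^2" "l^2 \<noteq> - (l'^2)"
  shows "has_degree (Upsilon g) 4"
proof -
  have "l \<noteq> l'" using l(2) by auto
  obtain e where e: "e \<noteq> 0" "g *v e = l *s e"
    using eigenvector_2x2_exists[OF tr det \<open>l \<noteq> l'\<close>] .
  obtain f where f: "f \<noteq> 0" "g *v f = l' *s f"
    using eigenvector_2x2_exists[of g l' l] tr det \<open>l \<noteq> l'\<close> by (auto simp: add.commute mult.commute)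
  have "det2 e f \<noteq> 0" using det2_eigenvectors_nonzero[OF e(1) f(1) e(2) f(2) \<open>l \<noteq> l'\<close>] .
  then obtain p where "line_test g p \<noteq> 0"
    using line_test_nonzero_in_eigenbasis[OF e(2) f(2)] l by auto
  moreover have "invertible g" using det l(1) by (simp add: invertible_det_nz)
  ultimately show ?thesis using has_degree_Upsilon_if_line_test by blast
qed

text \<open>The eigenvalues of the lift are \<open>\<plusminus>e\<^sup>\<minus>\<^sup>i\<^sup>\<epsilon>\<^sup>/\<^sup>2\<close> and \<open>\<plusminus>e\<^sup>i\<^sup>\<epsilon>\<^sup>/\<^sup>2\<close>.\<close>
lemma lift_of_rotation_eigenvalues:
  assumes "lift_of_rotation g n eps"
  obtains l l' where "g$1$1 + g$2$2 = l + l'" "det g = l * l'" "l * l' = 1"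
    "l^2 - l'^2 = - 2 * \<i> * complex_of_real (sin eps)" "l^2 + l'^2 = 2 * complex_of_real (cos eps)"
proof -
  from assms obtain \<sigma> :: complex where \<sigma>: "\<sigma> \<in> {1, -1}" and norm_n: "norm n = 1" and g:
    "g = (\<chi> i j. \<sigma> * (complex_of_real (cos (eps/2)) * (mat 1 :: complex^2^2) $ i $ j
                          - \<i> * complex_of_real (sin (eps/2)) * pauli_dot n $ i $ j))"
    unfolding lift_of_rotation_def by (elim conjE bexE) blast
  define C where "C = complex_of_real (cos (eps/2))"
  define S where "S = complex_of_real (sin (eps/2))"
  define N1 where "N1 = complex_of_real (n$1)"
  define N2 where "N2 = complex_of_real (n$2)"
  define N3 where "N3 = complex_of_real (n$3)"
  have "(n$1)^2 + (n$2)^2 + (n$3)^2 = 1"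
    using norm_n unfolding norm_vec_def L2_set_def by (simp add: sum_3)
  then have N: "N1^2 + N2^2 + N3^2 = 1"
    unfolding N1_def N2_def N3_def of_real_power[symmetric] of_real_add[symmetric] by simp
  have CS: "C^2 + S^2 = 1"
    unfolding C_def S_def of_real_power[symmetric] of_real_add[symmetric] by simp
  have \<sigma>2: "\<sigma> * \<sigma> = 1" using \<sigma> by auto
  have ii: "\<i> * \<i> = -1" by simp
  have entries: "g$1$1 = \<sigma> * (C - \<i> * S * N3)" "g$1$2 = \<sigma> * (- (\<i> * S * (N1 - \<i> * N2)))"
    "g$2$1 = \<sigma> * (- (\<i> * S * (N1 + \<i> * N2)))" "g$2$2 = \<sigma> * (C - \<i> * S * (- N3))"
    unfolding g C_def S_def N1_def N2_def N3_def by (simp_all add: mat_def pauli_dot_def)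
  define l where "l = \<sigma> * (C - \<i> * S)"
  define l' where "l' = \<sigma> * (C + \<i> * S)"
  have "l * l' = 1" unfolding l_def l'_def using \<sigma>2 ii CS by algebra
  moreover have "g$1$1 + g$2$2 = l + l'" unfolding entries l_def l'_def by algebra
  moreover have "det g = l * l'"
    unfolding det_2 entries \<open>l * l' = 1\<close> using \<sigma>2 ii CS N by algebra
  moreover have "l^2 - l'^2 = - 2 * \<i> * complex_of_real (sin eps)"
  proof -
    have "sin eps = 2 * sin (eps/2) * cos (eps/2)" using sin_double[of "eps/2"] by simp
    then have "complex_of_real (sin eps) = 2 * S * C" unfolding S_def C_def by simp
    then show ?thesis unfolding l_def l'_def using \<sigma>2 ii by algebra
  qed
  moreover have "l^2 + l'^2 = 2 * complex_of_real (cos eps)"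
  proof -
    have "cos eps = (cos (eps/2))^2 - (sin (eps/2))^2" using cos_double[of "eps/2"] by simp
    then have "complex_of_real (cos eps) = C^2 - S^2" unfolding S_def C_def by simp
    then show ?thesis unfolding l_def l'_def using \<sigma>2 ii by algebra
  qed
  ultimately show ?thesis using that by blast
qed

theorem proposition5p38:
  shows "\<exists>\<delta>>0. \<forall>g n eps. 0 < eps \<and> eps < \<delta> \<and> lift_of_rotation g n eps
            \<longrightarrow> has_degree (Upsilon g) 4"
proof (intro exI[of _ "pi/2"] conjI allI impI)
  fix g :: "complex^2^2" and n :: "real^3" and eps :: real
  assume asm: "0 < eps \<and> eps < pi/2 \<and> lift_of_rotation g n eps"
  then obtain l l' where tr_det: "g$1$1 + g$2$2 = l + l'" "det g = l * l'" and "l * l' = 1"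
    and diff: "l^2 - l'^2 = - 2 * \<i> * complex_of_real (sin eps)"
    and sum: "l^2 + l'^2 = 2 * complex_of_real (cos eps)"
    using lift_of_rotation_eigenvalues by blast
  have "sin eps > 0" "cos eps > 0" using asm by (auto intro: sin_gt_zero cos_gt_zero)
  then have "l^2 - l'^2 \<noteq> 0" "l^2 + l'^2 \<noteq> 0" unfolding diff sum by simp_all
  then have "l^2 \<noteq> l'^2" "l^2 \<noteq> - (l'^2)" by (auto simp: add_eq_0_iff2)
  with tr_det \<open>l * l' = 1\<close> show "has_degree (Upsilon g) 4"
    by (intro has_degree_Upsilon_if_eigenvalues) simp_all
qed simp

end
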